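(* Let $(A,n_1,\ldots,n_r)$ be an excessively clusterizable A-configuration. Then there exist nonnegative integers $m_1,\ldots,m_r$ such that $m_i=0$ whenever $n_i=0$, $m_1+\cdots+m_r=|A|$, and $(A,m_1,\ldots,m_r)$ is a simply excessively clusterizable A-configuration.
   Context: Setting: $\Phi$ a simply laced root system of rank $r$ with positive roots $\Phi^+$, simple roots $\alpha_1,\ldots,\alpha_r$, scalar product normalized so $(\alpha,\alpha)=2$. $\mathrm{supp}\,v$ for $v=\sum a_j\alpha_j$ is $\{\alpha_j:a_j\ne0\}$. For $A\subseteq\Phi^+$ and $I\subseteq\{1,\ldots,r\}$, $R_I(A)$ is the set of $\alpha\in A$ whose support contains some $\alpha_j$, $j\in I$. An A-configuration is $(A,n_1,\ldots,n_r)$ with $A\subseteq\Phi^+$, $n_j\in\mathbb Z_{\ge0}$, $\sum n_j=|A|$. A set $A\subseteq\Phi^+$ is an $I$-cluster if: (1) coefficients of $\alpha_j$, $j\in I$, in elements of $A$ are $\le1$; (2) $(\alpha,\beta)\ne-1$ for distinct $\alpha,\beta\in A$; (3) if $\alpha,\beta\in A$, $(\alpha,\beta)=0$, then $\mathrm{supp}\,\alpha\cap\mathrm{supp}\,\beta$ contains no $\alpha_j$ with $j\in I$. With $I=\{j:n_j>0\}$, $(A,n)$ is excessive if $|R_I(A)|=\sum n_j$ and $|R_J(A)|>\sum_{j\in J}n_j$ for all nonempty $J\subsetneq I$; it is an excessive cluster if moreover $A$ is an $I$-cluster; it is a simple excessive cluster if it is an excessive cluster and $|I|=1$. Excessively clusterizable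 (recursively on $|A|$): $(\varnothing,0,\ldots,0)$ is; for $|A|>0$, $(A,n)$ is if there is nonempty $I$ with $n_j>0$ for $j\in I$ such that, with $k_j=n_j$ ($j\in I$), $k_j=0$ otherwise, $|R_I(A)|=\sum k_j$, $(R_I(A),k)$ is an excessive cluster and $(A\setminus R_I(A),n-k)$ is excessively clusterizable. Simply excessively clusterizable (recursively on $|A|$): $(\varnothing,0,\ldots,0)$ is; for $|A|>0$, $(A,n)$ is if there is an index $i$ with $n_i>0$ such that, with $k_i=n_i$ and $k_j=0$ for $j\ne i$, $|R_{\{i\}}(A)|=n_i$, $(R_{\{i\}}(A),k)$ is a simple excessive cluster, and $(A\setminus R_{\{i\}}(A),n-k)$ is simply excessively clusterizable. *)

theory Defs
  imports Complex_Main
begin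

text \<open>Simply laced root system of rank r, given by its Cartan matrix C on indices 1..r
  (symmetric, diagonal 2, off-diagonal entries 0 or -1, positive definite).
  Elements of the root lattice are coefficient vectors w.r.t. the simple roots,
  i.e. functions nat => int (only indices 1..r matter).\<close>

definition simply_laced_cartan :: "nat \<Rightarrow> (nat \<Rightarrow> nat \<Rightarrow> int) \<Rightarrow> bool" where
  "simply_laced_cartan r C \<longleftrightarrow>
     (\<forall>i\<in>{1..r}. C i i = 2) \<and>
     (\<forall>i\<in>{1..r}. \<forall>j\<in>{1..r}. C i j = C j i) \<and>
     (\<forall>i\<in>{1..r}. \<forall>j\<in>{1..r}. i \<noteq> j \<longrightarrow> C i j \<in> {0, -1}) \<and>
     (\<forall>x :: nat \<Rightarrow> real. (\<exists>i\<in>{1..r}. x i \<noteq> 0) \<longrightarrow>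
        (\<Sum>i\<in>{1..r}. \<Sum>j\<in>{1..r}. x i * of_int (C i j) * x j) > 0)"

definition ip :: "nat \<Rightarrow> (nat \<Rightarrow> nat \<Rightarrow> int) \<Rightarrow> (nat \<Rightarrow> int) \<Rightarrow> (nat \<Rightarrow> int) \<Rightarrow> int" where
  "ip r C u v = (\<Sum>i\<in>{1..r}. \<Sum>j\<in>{1..r}. u i * C i j * v j)"

definition simple_root :: "nat \<Rightarrow> nat \<Rightarrow> int" where
  "simple_root i = (\<lambda>j. if j = i then 1 else 0)"

definition refl :: "nat \<Rightarrow> (nat \<Rightarrow> nat \<Rightarrow> int) \<Rightarrow> nat \<Rightarrow> (nat \<Rightarrow> int) \<Rightarrow> (nat \<Rightarrow> int)" where
  "refl r C i v = (\<lambda>j. v j - ip r C v (simple_root i) * simple_root i j)"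

inductive_set roots :: "nat \<Rightarrow> (nat \<Rightarrow> nat \<Rightarrow> int) \<Rightarrow> (nat \<Rightarrow> int) set"
  for r C where
  simple: "i \<in> {1..r} \<Longrightarrow> simple_root i \<in> roots r C"
| reflect: "v \<in> roots r C \<Longrightarrow> i \<in> {1..r} \<Longrightarrow> refl r C i v \<in> roots r C"

definition pos_roots :: "nat \<Rightarrow> (nat \<Rightarrow> nat \<Rightarrow> int) \<Rightarrow> (nat \<Rightarrow> int) set" where
  "pos_roots r C = {v \<in> roots r C. \<forall>j. v j \<ge> 0}"

definition supp :: "nat \<Rightarrow> (nat \<Rightarrow> int) \<Rightarrow> nat set" where
  "supp r v = {j \<in> {1..r}. v j \<noteq> 0}"

definition R :: "nat \<Rightarrow> nat set \<Rightarrow> (nat \<Rightarrow> int) set \<Rightarrow> (nat \<Rightarrow> int) set" where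
  "R r I A = {\<alpha> \<in> A. \<exists>j\<in>I. j \<in> supp r \<alpha>}"

definition is_cluster :: "nat \<Rightarrow> (nat \<Rightarrow> nat \<Rightarrow> int) \<Rightarrow> nat set \<Rightarrow> (nat \<Rightarrow> int) set \<Rightarrow> bool" where
  "is_cluster r C I A \<longleftrightarrow>
     (\<forall>\<alpha>\<in>A. \<forall>j\<in>I. \<alpha> j \<le> 1) \<and>
     (\<forall>\<alpha>\<in>A. \<forall>\<beta>\<in>A. \<alpha> \<noteq> \<beta> \<longrightarrow> ip r C \<alpha> \<beta> \<noteq> -1) \<and>
     (\<forall>\<alpha>\<in>A. \<forall>\<beta>\<in>A. ip r C \<alpha> \<beta> = 0 \<longrightarrow> (\<forall>j\<in>I. j \<notin> supp r \<alpha> \<inter> supp r \<beta>))"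

definition excessive :: "nat \<Rightarrow> (nat \<Rightarrow> int) set \<Rightarrow> (nat \<Rightarrow> nat) \<Rightarrow> bool" where
  "excessive r A n \<longleftrightarrow>
     (let I = {j\<in>{1..r}. n j > 0} in
       card (R r I A) = (\<Sum>j\<in>{1..r}. n j) \<and>
       (\<forall>J. J \<noteq> {} \<and> J \<subset> I \<longrightarrow> card (R r J A) > (\<Sum>j\<in>J. n j)))"

definition excessive_cluster :: "nat \<Rightarrow> (nat \<Rightarrow> nat \<Rightarrow> int) \<Rightarrow> (nat \<Rightarrow> int) set \<Rightarrow> (nat \<Rightarrow> nat) \<Rightarrow> bool" where
  "excessive_cluster r C A n \<longleftrightarrow>
     excessive r A n \<and> is_cluster r C {j\<in>{1..r}. n j > 0} A"

definition simple_excessive_cluster :: "nat \<Rightarrow> (nat \<Rightarrow> nat \<Rightarrow> int) \<Rightarrow> (nat \<Rightarrow> int) set \<Rightarrow> (nat \<Rightarrow> nat) \<Rightarrow> bool" where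
  "simple_excessive_cluster r C A n \<longleftrightarrow>
     excessive_cluster r C A n \<and> card {j\<in>{1..r}. n j > 0} = 1"

inductive exc_clusterizable :: "nat \<Rightarrow> (nat \<Rightarrow> nat \<Rightarrow> int) \<Rightarrow> (nat \<Rightarrow> int) set \<Rightarrow> (nat \<Rightarrow> nat) \<Rightarrow> bool"
  for r C where
  empty: "(\<forall>j\<in>{1..r}. n j = 0) \<Longrightarrow> exc_clusterizable r C {} n"
| step: "\<lbrakk> A \<noteq> {}; I \<noteq> {}; I \<subseteq> {1..r}; \<forall>j\<in>I. n j > 0;
          k = (\<lambda>j. if j \<in> I then n j else 0);
          card (R r I A) = (\<Sum>j\<in>{1..r}. k j);
          excessive_cluster r C (R r I A) k;
          exc_clusterizable r C (A - R r I A) (\<lambda>j. n j - k j) \<rbrakk>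
        \<Longrightarrow> exc_clusterizable r C A n"

inductive simply_exc_clusterizable :: "nat \<Rightarrow> (nat \<Rightarrow> nat \<Rightarrow> int) \<Rightarrow> (nat \<Rightarrow> int) set \<Rightarrow> (nat \<Rightarrow> nat) \<Rightarrow> bool"
  for r C where
  empty: "(\<forall>j\<in>{1..r}. n j = 0) \<Longrightarrow> simply_exc_clusterizable r C {} n"
| step: "\<lbrakk> A \<noteq> {}; i \<in> {1..r}; n i > 0;
          k = (\<lambda>j. if j = i then n i else 0);
          card (R r {i} A) = n i;
          simple_excessive_cluster r C (R r {i} A) k;
          simply_exc_clusterizable r C (A - R r {i} A) (\<lambda>j. n j - k j) \<rbrakk>
        \<Longrightarrow> simply_exc_clusterizable r C A n"

definition A_configuration :: "nat \<Rightarrow> (nat \<Rightarrow> nat \<Rightarrow> int) \<Rightarrow> (nat \<Rightarrow> int) set \<Rightarrow> (nat \<Rightarrow> nat) \<Rightarrow> bool" where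
  "A_configuration r C A n \<longleftrightarrow> A \<subseteq> pos_roots r C \<and> (\<Sum>j\<in>{1..r}. n j) = card A"

end

theory Submission
  imports Defs
begin

text \<open>An \<open>I\<close>-cluster \<open>S\<close> all of whose roots meet \<open>I\<close>
  splits, index by index, into the sets \<open>R {i} S\<close>. Each is an \<open>{i}\<close>-cluster, and for a
  single index the excessiveness conditions on proper subsets are vacuous, so with
  multiplicity \<open>card (R {i} S)\<close> it is a simple excessive cluster. Peeling every piece of an
  excessive clusterization in this way gives a simple one whose multiplicities live on the
  indices used, hence where \<open>n i > 0\<close>; the identity \<open>\<Sum> m i = card A\<close> holds for every
  simple clusterization.\<close>

lemma is_cluster_mono: "is_cluster r C I S \<Longrightarrow> T \<subseteq> S \<Longrightarrow> J \<subseteq> I \<Longrightarrow> is_cluster r C J T"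
  unfolding is_cluster_def by blast

lemma simple_excessive_cluster_singleton:
  assumes "i \<in> {1..r}" "finite T" "T \<noteq> {}" "is_cluster r C {i} T" "\<forall>\<alpha>\<in>T. i \<in> supp r \<alpha>"
  shows "simple_excessive_cluster r C T (\<lambda>j. if j = i then card T else 0)"
proof -
  have support: "{j \<in> {1..r}. (if j = i then card T else 0) > 0} = {i}"
    using assms(1-3) by (auto simp: card_gt_0_iff)
  have "R r {i} T = T" using assms(5) unfolding R_def by auto
  then show ?thesis
    using assms(1,4) unfolding simple_excessive_cluster_def excessive_cluster_def excessive_def support
    by (auto simp: subset_singleton_iff)
qed

lemma simply_exc_clusterizable_add_cluster:
  assumes D: "simply_exc_clusterizable r C D m" and "m i = 0" "R r {i} D = {}"
    and "i \<in> {1..r}" "finite T" "is_cluster r C {i} T" "\<forall>\<alpha>\<in>T. i \<in> supp r \<alpha>"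
  shows "simply_exc_clusterizable r C (T \<union> D) (m(i := card T))"
proof (cases "T = {}")
  case True
  then show ?thesis using D \<open>m i = 0\<close> by (simp add: fun_upd_idem)
next
  case False
  have R_union: "R r {i} (T \<union> D) = T"
    using assms(3,7) unfolding R_def by auto
  have rest: "T \<union> D - T = D"
    using assms(3,7) unfolding R_def by auto
  define k where "k = (\<lambda>j. if j = i then card T else 0)"
  have upd_i: "(m(i := card T)) i = card T" by simp
  have k: "k = (\<lambda>j. if j = i then (m(i := card T)) i else 0)" unfolding upd_i k_def ..
  have "simply_exc_clusterizable r C (T \<union> D - R r {i} (T \<union> D)) (\<lambda>j. (m(i := card T)) j - k j)"
  proof -
    have "(\<lambda>j. (m(i := card T)) j - k j) = m" using \<open>m i = 0\<close> unfolding k_def by auto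
    then show ?thesis using D by (simp add: R_union rest)
  qed
  moreover have "simple_excessive_cluster r C (R r {i} (T \<union> D)) k"
    unfolding R_union k_def using False assms(4-7) by (simp add: simple_excessive_cluster_singleton)
  moreover have "card (R r {i} (T \<union> D)) = (m(i := card T)) i" "0 < (m(i := card T)) i"
    using False \<open>finite T\<close> unfolding upd_i R_union by (simp_all add: card_gt_0_iff)
  moreover have "T \<union> D \<noteq> {}" using False by simp
  ultimately show ?thesis
    using simply_exc_clusterizable.step[where n = "m(i := card T)", OF _ assms(4) _ k] by blast
qed

lemma simply_exc_clusterizable_add_cluster_set:
  assumes "finite I" "I \<subseteq> {1..r}" "finite S" "is_cluster r C I S"
    and "\<forall>\<alpha>\<in>S. \<exists>j\<in>I. j \<in> supp r \<alpha>"
    and "simply_exc_clusterizable r C D m" "R r I D = {}" "\<forall>j\<in>I. m j = 0"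
  shows "\<exists>m'. (\<forall>j. j \<notin> I \<longrightarrow> m' j = m j) \<and> simply_exc_clusterizable r C (S \<union> D) m'"
  using assms
proof (induction I arbitrary: S rule: finite_induct)
  case empty
  then show ?case by auto
next
  case (insert i I)
  define T where "T = R r {i} S"
  define S' where "S' = S - T"
  have "is_cluster r C I S'"
    using is_cluster_mono[OF insert.prems(3), of S' I] unfolding S'_def by blast
  moreover have "\<forall>\<alpha>\<in>S'. \<exists>j\<in>I. j \<in> supp r \<alpha>" "R r I D = {}"
    using insert.prems(4,6) unfolding S'_def T_def R_def by auto
  moreover have "I \<subseteq> {1..r}" "finite S'" "\<forall>j\<in>I. m j = 0"
    using insert.prems(1,2,7) unfolding S'_def by auto
  ultimately obtain m' where m': "\<forall>j. j \<notin> I \<longrightarrow> m' j = m j"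
    and S'D: "simply_exc_clusterizable r C (S' \<union> D) m'"
    using insert.IH insert.prems(5) by blast
  have "simply_exc_clusterizable r C (T \<union> (S' \<union> D)) (m'(i := card T))"
  proof (rule simply_exc_clusterizable_add_cluster[OF S'D])
    show "m' i = 0" using m' insert.hyps(2) insert.prems(7) by simp
    show "R r {i} (S' \<union> D) = {}"
      using insert.prems(6) unfolding S'_def T_def R_def by auto
    show "finite T" "is_cluster r C {i} T" "\<forall>\<alpha>\<in>T. i \<in> supp r \<alpha>"
      using insert.prems(2,3) is_cluster_mono[OF insert.prems(3)] unfolding T_def R_def by auto
  qed (use insert.prems(1) in auto)
  moreover have "T \<union> (S' \<union> D) = S \<union> D" unfolding S'_def T_def R_def by auto
  moreover have "\<forall>j. j \<notin> insert i I \<longrightarrow> (m'(i := card T)) j = m j" using m' by simp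
  ultimately show ?case by metis
qed

lemma exc_clusterizable_imp_simply_exc_clusterizable:
  assumes "exc_clusterizable r C A n"
  shows "\<exists>m. (\<forall>i\<in>{1..r}. n i = 0 \<longrightarrow> m i = 0) \<and> simply_exc_clusterizable r C A m"
  using assms
proof (induction rule: exc_clusterizable.induct)
  case (empty n)
  then show ?case by (auto intro: simply_exc_clusterizable.empty)
next
  case (step A I n k)
  obtain m where m: "\<forall>i\<in>{1..r}. n i - k i = 0 \<longrightarrow> m i = 0"
    and rest: "simply_exc_clusterizable r C (A - R r I A) m"
    using step.IH by blast
  obtain j where "j \<in> I" using step.hyps(2) by blast
  have "k j \<le> (\<Sum>j\<in>{1..r}. k j)"
    by (rule member_le_sum) (use \<open>j \<in> I\<close> step.hyps(3) in auto)
  moreover have "0 < k j" using \<open>j \<in> I\<close> step.hyps(4,5) by simp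
  ultimately have "finite (R r I A)" using step.hyps(6) card.infinite by fastforce
  moreover have "{j \<in> {1..r}. k j > 0} = I" using step.hyps(3-5) by auto
  then have "is_cluster r C I (R r I A)"
    using step.hyps(7) unfolding excessive_cluster_def by simp
  moreover have "finite I" using step.hyps(3) finite_subset by blast
  moreover have "\<forall>\<alpha>\<in>R r I A. \<exists>j\<in>I. j \<in> supp r \<alpha>" "R r I (A - R r I A) = {}"
    unfolding R_def by auto
  moreover have "\<forall>j\<in>I. m j = 0" using m step.hyps(3-5) by auto
  ultimately obtain m' where m': "\<forall>j. j \<notin> I \<longrightarrow> m' j = m j"
    and "simply_exc_clusterizable r C (R r I A \<union> (A - R r I A)) m'"
    using simply_exc_clusterizable_add_cluster_set[OF _ step.hyps(3) _ _ _ rest] by blast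
  moreover have "R r I A \<union> (A - R r I A) = A" unfolding R_def by auto
  moreover have "\<forall>i\<in>{1..r}. n i = 0 \<longrightarrow> m' i = 0"
  proof (intro ballI impI)
    fix i assume "i \<in> {1..r}" "n i = 0"
    moreover have "i \<notin> I" using step.hyps(4) \<open>n i = 0\<close> by auto
    ultimately show "m' i = 0" using m m' by simp
  qed
  ultimately show ?case by metis
qed

lemma simply_exc_clusterizable_sum_eq_card:
  assumes "simply_exc_clusterizable r C A m"
  shows "finite A \<and> (\<Sum>j\<in>{1..r}. m j) = card A"
  using assms
proof (induction rule: simply_exc_clusterizable.induct)
  case (empty n)
  then show ?case by simp
next
  case (step A i n k)
  have fin: "finite (R r {i} A)" using step.hyps(3,5) card.infinite by fastforce
  have "(\<Sum>j\<in>{1..r}. n j) = (\<Sum>j\<in>{1..r}. n j - k j) + (\<Sum>j\<in>{1..r}. k j)"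
    unfolding sum.distrib[symmetric] step.hyps(4) by (intro sum.cong) auto
  also have "(\<Sum>j\<in>{1..r}. k j) = card (R r {i} A)"
    using step.hyps(2,4,5) by simp
  finally show ?case
    using step.IH fin card_Diff_subset[OF fin] card_mono[of A "R r {i} A"]
    by (auto simp: R_def)
qed

theorem mainTheorem11:
  fixes r :: nat and C :: "nat \<Rightarrow> nat \<Rightarrow> int"
    and A :: "(nat \<Rightarrow> int) set" and n :: "nat \<Rightarrow> nat"
  assumes "simply_laced_cartan r C"
    and "A_configuration r C A n"
    and "exc_clusterizable r C A n"
  shows "\<exists>m :: nat \<Rightarrow> nat. (\<forall>i\<in>{1..r}. n i = 0 \<longrightarrow> m i = 0) \<and>
           (\<Sum>i\<in>{1..r}. m i) = card A \<and>
           A_configuration r C A m \<and> simply_exc_clusterizable r C A m"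
proof -
  obtain m where "\<forall>i\<in>{1..r}. n i = 0 \<longrightarrow> m i = 0" and simple: "simply_exc_clusterizable r C A m"
    using exc_clusterizable_imp_simply_exc_clusterizable[OF assms(3)] by blast
  moreover have "(\<Sum>i\<in>{1..r}. m i) = card A"
    using simply_exc_clusterizable_sum_eq_card[OF simple] by blast
  ultimately show ?thesis using assms(2) unfolding A_configuration_def by blast
qed

end
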